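(* Let $\Omega$ be a finite set, $\mathcal C$ the set of all functions from the power set of $\Omega$ to $\mathbb R$, $\mathcal P\subseteq\mathcal C$ the set of probability functions, $M$ finite, and let $s:\mathcal C\to[-\infty,M]^\Omega$ be a scoring rule that is quasi-strictly proper and continuous on $\mathcal C$. Then either $E_p s(p)$ is infinite for some $p\in\mathcal P$, or both: (i) for any sequence $(p_n)$ in $\mathcal P$ converging to some $p\in\mathcal P$ such that $s(p_n)$ is finite for all $n$ while $s(p)$ is not finite, $\lim_n E_{p_n}s(p_n)=E_p s(p)$; and (ii) the set $F=s[\mathcal P]\cap\mathbb R^\Omega$ of finite scores of probabilities is dense in $\partial^+\operatorname{Conv}F$.
   Context: $\mathcal C$ is topologized as $\mathbb R^{2^\Omega}$ and $[-\infty,M]^\Omega$ with the product of the usual extended-real topology. For $p\in\mathcal P$ and $f:\Omega\to[-\infty,\infty]$, $E_p f=\sum_{\omega:\,p(\{\omega\})\neq0}p(\{\omega\})f(\omega)$. $s$ is proper if $E_p s(p)\ge E_p s(c)$ for all $p\in\mathcal P$, $c\in\mathcal C$; quasi-strictly proper if moreover the inequality is strict whenever $c\in\mathcal C\setminus\mathcal P$. A score is finite if all its values are finite. $\mathcal P$ carries the topology in which $p_n\to p$ iff $p_n(\{\omega\})\to p(\{\omega\})$ for every $\omega$. With $\langle f,g\rangle=\sum_\omega f(\omega)g(\omega)$ on $\mathbb R^\Omega$, a boundary point $z$ of $G\subseteq\mathbb R^\Omega$ is positive-facing if there exists $v\in(0,\infty)^\Omega$ with $\langle v,w\rangle\le\langle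 v,z\rangle$ for all $w\in G$; $\partial^+G$ denotes the set of such points. $\operatorname{Conv}F$ is the convex hull of $F$; $F$ dense in $B$ means every open set meeting $B$ meets $F$. *)

theory Defs
  imports "HOL-Analysis.Analysis"
begin

text \<open>Omega is a finite type 'w. Credences C = functions 'w set => real (product topology
  from Function_Topology). Scores take values in 'w => ereal.\<close>

definition prob_fun :: "('w set \<Rightarrow> real) \<Rightarrow> bool" where
  "prob_fun c \<longleftrightarrow> (\<forall>A. c A \<ge> 0) \<and> c UNIV = 1 \<and>
     (\<forall>A B. A \<inter> B = {} \<longrightarrow> c (A \<union> B) = c A + c B)"

definition Probs :: "('w set \<Rightarrow> real) set" where
  "Probs = {c. prob_fun c}"

definition expect :: "('w::finite set \<Rightarrow> real) \<Rightarrow> ('w \<Rightarrow> ereal) \<Rightarrow> ereal" where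
  "expect p f = (\<Sum>\<omega>\<in>{\<omega>. p {\<omega>} \<noteq> 0}. ereal (p {\<omega>}) * f \<omega>)"

definition proper :: "(('w::finite set \<Rightarrow> real) \<Rightarrow> ('w \<Rightarrow> ereal)) \<Rightarrow> bool" where
  "proper s \<longleftrightarrow> (\<forall>p\<in>Probs. \<forall>c. expect p (s p) \<ge> expect p (s c))"

definition quasi_strictly_proper :: "(('w::finite set \<Rightarrow> real) \<Rightarrow> ('w \<Rightarrow> ereal)) \<Rightarrow> bool" where
  "quasi_strictly_proper s \<longleftrightarrow> proper s \<and>
     (\<forall>p\<in>Probs. \<forall>c. c \<notin> Probs \<longrightarrow> expect p (s p) > expect p (s c))"

definition finite_score :: "('w \<Rightarrow> ereal) \<Rightarrow> bool" where
  "finite_score f \<longleftrightarrow> (\<forall>\<omega>. \<bar>f \<omega>\<bar> \<noteq> \<infinity>)"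

definition ip :: "real^'w::finite \<Rightarrow> real^'w \<Rightarrow> real" where
  "ip f g = (\<Sum>\<omega>\<in>UNIV. f $ \<omega> * g $ \<omega>)"

definition pos_boundary :: "(real^'w::finite) set \<Rightarrow> (real^'w) set" where
  "pos_boundary G = {z \<in> frontier G. \<exists>v. (\<forall>\<omega>. v $ \<omega> > 0) \<and> (\<forall>w\<in>G. ip v w \<le> ip v z)}"

definition dense_in :: "('a::topological_space) set \<Rightarrow> 'a set \<Rightarrow> bool" where
  "dense_in F B \<longleftrightarrow> (\<forall>U. open U \<and> U \<inter> B \<noteq> {} \<longrightarrow> U \<inter> F \<noteq> {})"

definition finite_prob_scores :: "(('w::finite set \<Rightarrow> real) \<Rightarrow> ('w \<Rightarrow> ereal)) \<Rightarrow> (real^'w) set" where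
  "finite_prob_scores s = {(\<chi> \<omega>. real_of_ereal (s p \<omega>)) | p. p \<in> Probs \<and> finite_score (s p)}"

end

(*
  Part (i): propriety gives E_{p_n} s(p_m) <= E_{p_n} s(p_n) for all m and n. Letting first
  n and then m tend to infinity, continuity of s on the support of p bounds the limit inferior
  of E_{p_n} s(p_n) below by E_p s(p); replacing the scores outside the support of p by the
  upper bound M bounds the limit superior above by E_p s(p).

  Part (ii): every positive-facing boundary point z of Conv F already lies in F. Normalise a
  positive supporting vector at z to a probability q of full support. Propriety puts the
  closure of Conv F below the hyperplane {w. q . w = E_q s(q)}, so z and s(q) both maximise
  q . w there. Moving q slightly towards a vertex of the simplex and letting the step tend to
  zero from both sides, continuity of s at q forces each coordinate of z to agree with s(q).
*)
theory Submission
  imports Defs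
begin

lemma tendsto_squeeze_lower_approximants:
  fixes a b :: "nat \<Rightarrow> 'a::linorder_topology"
  assumes lower: "\<And>n m. e n m \<le> a n" and e_lim: "\<And>m. (\<lambda>n. e n m) \<longlonglongrightarrow> E m"
    and E_lim: "E \<longlonglongrightarrow> L" and upper: "\<And>n. a n \<le> b n" and b_lim: "b \<longlonglongrightarrow> L"
  shows "a \<longlonglongrightarrow> L"
proof (rule order_tendstoI)
  fix y assume "y < L"
  then obtain m where "y < E m"
    using order_tendstoD(1)[OF E_lim] by (metis eventually_sequentially order.refl)
  then have "\<forall>\<^sub>F n in sequentially. y < e n m"
    using order_tendstoD(1)[OF e_lim] by blast
  then show "\<forall>\<^sub>F n in sequentially. y < a n"
    by eventually_elim (use lower in \<open>blast intro: less_le_trans\<close>)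
next
  fix y assume "L < y"
  then have "\<forall>\<^sub>F n in sequentially. b n < y"
    using order_tendstoD(2)[OF b_lim] by blast
  then show "\<forall>\<^sub>F n in sequentially. a n < y"
    by eventually_elim (use upper in \<open>blast intro: le_less_trans\<close>)
qed

lemma eq_if_mult_le_near_zero:
  fixes c l :: real
  assumes lim: "(g \<longlongrightarrow> l) (at 0)" and "\<delta> > 0"
    and le: "\<And>t. \<bar>t\<bar> < \<delta> \<Longrightarrow> t * c \<le> t * g t"
  shows "c = l"
proof (rule antisym)
  have "\<forall>\<^sub>F t in at_right 0. c \<le> g t"
    unfolding eventually_at_right_field
    using \<open>\<delta> > 0\<close> le by (intro exI[of _ \<delta>]) (auto simp: mult_le_cancel_left)
  then show "c \<le> l"
    using lim by (intro tendsto_lowerbound[of g]) (auto intro: tendsto_mono at_le)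
next
  have "\<forall>\<^sub>F t in at_left 0. g t \<le> c"
    unfolding eventually_at_left_field
    using \<open>\<delta> > 0\<close> le by (intro exI[of _ "- \<delta>"]) (auto simp: mult_le_cancel_left)
  then show "l \<le> c"
    using lim by (intro tendsto_upperbound[of g]) (auto intro: tendsto_mono at_le)
qed

lemma tendsto_inner_on_support:
  fixes x z :: "real^'w::finite"
  assumes "\<And>\<omega>. x $ \<omega> \<noteq> 0 \<Longrightarrow> ((\<lambda>t. y t $ \<omega>) \<longlongrightarrow> z $ \<omega>) F"
  shows "((\<lambda>t. x \<bullet> y t) \<longlongrightarrow> x \<bullet> z) F"
  unfolding inner_vec_def inner_real_def
proof (rule tendsto_sum)
  fix \<omega>
  show "((\<lambda>t. x $ \<omega> * y t $ \<omega>) \<longlongrightarrow> x $ \<omega> * z $ \<omega>) F"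
  proof (cases "x $ \<omega> = 0")
    case False
    then show ?thesis
      by (intro tendsto_mult_left assms)
  qed simp
qed

lemma dense_in_if_subset: "B \<subseteq> F \<Longrightarrow> dense_in F B"
  unfolding dense_in_def by blast

definition prob_simplex :: "(real^'w::finite) set" where
  "prob_simplex = {x. (\<forall>\<omega>. 0 \<le> x $ \<omega>) \<and> (\<Sum>\<omega>\<in>UNIV. x $ \<omega>) = 1}"

definition prob_of_vec :: "real^'w::finite \<Rightarrow> ('w set \<Rightarrow> real)" where
  "prob_of_vec x = (\<lambda>A. \<Sum>\<omega>\<in>A. x $ \<omega>)"

definition prob_vec :: "('w::finite set \<Rightarrow> real) \<Rightarrow> real^'w" where
  "prob_vec p = (\<chi> \<omega>. p {\<omega>})"

(* real_of_ereal sends -\<infinity> to 0: score_vec f is only meaningful where f is finite, and it is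
  only ever paired with weights vanishing elsewhere. *)
definition score_vec :: "('w::finite \<Rightarrow> ereal) \<Rightarrow> real^'w" where
  "score_vec f = (\<chi> \<omega>. real_of_ereal (f \<omega>))"

lemma prob_vec_nth [simp]: "prob_vec p $ \<omega> = p {\<omega>}"
  by (simp add: prob_vec_def)

lemma score_vec_nth [simp]: "score_vec f $ \<omega> = real_of_ereal (f \<omega>)"
  by (simp add: score_vec_def)

lemma prob_of_vec_singleton [simp]: "prob_of_vec x {\<omega>} = x $ \<omega>"
  by (simp add: prob_of_vec_def)

lemma prob_vec_prob_of_vec [simp]: "prob_vec (prob_of_vec x) = x"
  by (simp add: prob_vec_def vec_eq_iff)

lemma ip_eq_inner: "ip x y = x \<bullet> y"
  by (simp add: ip_def inner_vec_def)

lemma finite_prob_scores_eq: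
  "finite_prob_scores s = {score_vec (s p) | p. p \<in> Probs \<and> finite_score (s p)}"
  by (simp add: finite_prob_scores_def score_vec_def)

lemma Probs_nonneg: "p \<in> Probs \<Longrightarrow> 0 \<le> p A"
  by (simp add: Probs_def prob_fun_def)

lemma prob_fun_eq_sum:
  fixes p :: "'w::finite set \<Rightarrow> real"
  assumes "prob_fun p"
  shows "p A = (\<Sum>\<omega>\<in>A. p {\<omega>})"
proof -
  have additive: "A \<inter> B = {} \<Longrightarrow> p (A \<union> B) = p A + p B" for A B
    using assms by (simp add: prob_fun_def)
  show ?thesis
  proof (induction A rule: infinite_finite_induct)
    case empty
    show ?case
      using additive[of "{}" "{}"] by simp
  next
    case (insert a A)
    then show ?case
      using additive[of "{a}" A] by simp
  qed simp
qed

lemma prob_of_vec_prob_vec: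
  assumes "p \<in> Probs"
  shows "prob_of_vec (prob_vec p) = p"
proof
  fix A
  show "prob_of_vec (prob_vec p) A = p A"
    using assms prob_fun_eq_sum[of p A] by (simp add: Probs_def prob_of_vec_def)
qed

lemma prob_of_vec_in_Probs:
  assumes "x \<in> prob_simplex"
  shows "prob_of_vec x \<in> Probs"
  using assms unfolding prob_simplex_def Probs_def prob_fun_def prob_of_vec_def
  by (simp add: sum_nonneg sum.union_disjoint)

lemma simplex_shift_towards_vertex:
  fixes q :: "real^'w::finite"
  assumes q: "q \<in> prob_simplex" "\<And>\<omega>'. 0 < q $ \<omega>'" and t: "\<bar>t\<bar> < q $ \<omega>"
  shows "q + t *\<^sub>R (axis \<omega> 1 - q) \<in> prob_simplex"
    and "0 < (q + t *\<^sub>R (axis \<omega> 1 - q)) $ \<omega>'"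
proof -
  have q_sum: "(\<Sum>i\<in>UNIV. q $ i) = 1"
    using q(1) by (simp add: prob_simplex_def)
  have "q $ \<omega> \<le> 1"
    using member_le_sum[of \<omega> UNIV "\<lambda>i. q $ i"] q(2) q_sum by (simp add: less_imp_le)
  show pos: "0 < (q + t *\<^sub>R (axis \<omega> 1 - q)) $ \<omega>'" for \<omega>'
  proof (cases "\<omega>' = \<omega>")
    case True
    have "\<bar>t * (1 - q $ \<omega>)\<bar> \<le> \<bar>t\<bar>"
      using \<open>q $ \<omega> \<le> 1\<close> q(2)[of \<omega>] by (simp add: abs_mult mult_left_le)
    then show ?thesis
      using True t by (simp add: axis_def algebra_simps)
  next
    case False
    have "0 < (1 - t) * q $ \<omega>'"
      using \<open>q $ \<omega> \<le> 1\<close> q(2)[of \<omega>'] t by simp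
    then show ?thesis
      using False by (simp add: axis_def algebra_simps)
  qed
  have "(\<Sum>i\<in>UNIV. axis \<omega> (1::real) $ i) = 1"
    by (simp add: axis_def)
  then show "q + t *\<^sub>R (axis \<omega> 1 - q) \<in> prob_simplex"
    using pos q_sum by (simp add: prob_simplex_def sum.distrib sum_subtractf less_imp_le
        flip: sum_distrib_left)
qed

lemma tendsto_score_vec_nth:
  fixes s :: "('w::finite set \<Rightarrow> real) \<Rightarrow> ('w \<Rightarrow> ereal)"
  assumes cont: "continuous_on UNIV s" and lim: "(X \<longlongrightarrow> x) F"
    and finite: "\<bar>s (prob_of_vec x) \<omega>\<bar> \<noteq> \<infinity>"
  shows "((\<lambda>t. score_vec (s (prob_of_vec (X t))) $ \<omega>) \<longlongrightarrow> score_vec (s (prob_of_vec x)) $ \<omega>) F"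
proof -
  have "continuous_on UNIV (prob_of_vec :: real^'w \<Rightarrow> _)"
    unfolding prob_of_vec_def by (intro continuous_on_coordinatewise_then_product continuous_intros)
  then have "continuous_on UNIV (\<lambda>x. s (prob_of_vec x))"
    using continuous_on_compose2[OF cont] by auto
  then have "continuous_on UNIV (\<lambda>x. s (prob_of_vec x) \<omega>)"
    by (rule continuous_on_product_then_coordinatewise)
  then have "((\<lambda>t. s (prob_of_vec (X t)) \<omega>) \<longlongrightarrow> s (prob_of_vec x) \<omega>) F"
    using lim by (rule continuous_on_tendsto_compose) auto
  then have "((\<lambda>t. s (prob_of_vec (X t)) \<omega>) \<longlongrightarrow> ereal (real_of_ereal (s (prob_of_vec x) \<omega>))) F"
    using finite by (simp add: ereal_real')
  then show ?thesis
    by (simp add: lim_real_of_ereal)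
qed

lemma expect_eq_inner:
  assumes "\<And>\<omega>. p {\<omega>} \<noteq> 0 \<Longrightarrow> \<bar>f \<omega>\<bar> \<noteq> \<infinity>"
  shows "expect p f = ereal (prob_vec p \<bullet> score_vec f)"
proof -
  have "expect p f = (\<Sum>\<omega>\<in>{\<omega>. p {\<omega>} \<noteq> 0}. ereal (p {\<omega>} * real_of_ereal (f \<omega>)))"
    unfolding expect_def
  proof (rule sum.cong)
    fix \<omega> assume "\<omega> \<in> {\<omega>. p {\<omega>} \<noteq> 0}"
    then have "ereal (real_of_ereal (f \<omega>)) = f \<omega>"
      using assms by (simp add: ereal_real')
    then show "ereal (p {\<omega>}) * f \<omega> = ereal (p {\<omega>} * real_of_ereal (f \<omega>))"
      by (metis times_ereal.simps(1))
  qed simp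
  also have "\<dots> = ereal (\<Sum>\<omega>\<in>UNIV. p {\<omega>} * real_of_ereal (f \<omega>))"
    by (subst sum.mono_neutral_left[of UNIV]) auto
  finally show ?thesis
    by (simp add: inner_vec_def)
qed

lemma expect_MInfty_if_MInfty_on_support:
  assumes nonneg: "\<And>\<omega>. 0 \<le> p {\<omega>}" and no_PInf: "\<And>\<omega>. f \<omega> \<noteq> \<infinity>"
    and "p {\<omega>} \<noteq> 0" and "f \<omega> = -\<infinity>"
  shows "expect p f = -\<infinity>"
proof -
  let ?S = "{\<omega>. p {\<omega>} \<noteq> 0}"
  have "expect p f = ereal (p {\<omega>}) * f \<omega> + (\<Sum>\<omega>'\<in>?S - {\<omega>}. ereal (p {\<omega>'}) * f \<omega>')"
    unfolding expect_def using \<open>p {\<omega>} \<noteq> 0\<close> by (subst sum.remove[of _ \<omega>]) auto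
  moreover have "(\<Sum>\<omega>'\<in>?S - {\<omega>}. ereal (p {\<omega>'}) * f \<omega>') \<noteq> \<infinity>"
    unfolding sum_Pinfty using nonneg no_PInf by (auto simp: ereal_mult_eq_PInfty not_less[symmetric])
  moreover have "p {\<omega>} > 0"
    using nonneg[of \<omega>] \<open>p {\<omega>} \<noteq> 0\<close> by linarith
  ultimately show ?thesis
    using \<open>f \<omega> = -\<infinity>\<close> by auto
qed

locale continuous_proper_score =
  fixes s :: "('w::finite set \<Rightarrow> real) \<Rightarrow> ('w \<Rightarrow> ereal)" and M :: real
  assumes bounded: "\<And>c \<omega>. s c \<omega> \<le> ereal M"
    and proper: "proper s"
    and cont: "continuous_on UNIV s"
    and finite_self_expect: "\<And>p. p \<in> Probs \<Longrightarrow> \<bar>expect p (s p)\<bar> \<noteq> \<infinity>"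
begin

lemma score_finite_on_support:
  assumes p: "p \<in> Probs" and "p {\<omega>} \<noteq> 0"
  shows "\<bar>s p \<omega>\<bar> \<noteq> \<infinity>"
proof
  have not_PInf: "s c \<omega>' \<noteq> \<infinity>" for c \<omega>'
    using bounded[of c \<omega>'] by auto
  assume "\<bar>s p \<omega>\<bar> = \<infinity>"
  then have "s p \<omega> = -\<infinity>"
    using not_PInf by auto
  then have "expect p (s p) = -\<infinity>"
    using expect_MInfty_if_MInfty_on_support Probs_nonneg[OF p] not_PInf \<open>p {\<omega>} \<noteq> 0\<close> by blast
  then show False
    using finite_self_expect[OF p] by simp
qed

lemma self_expect_eq_inner:
  "p \<in> Probs \<Longrightarrow> expect p (s p) = ereal (prob_vec p \<bullet> score_vec (s p))"
  by (intro expect_eq_inner score_finite_on_support)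

lemma inner_score_le_self:
  assumes p: "p \<in> Probs" and "finite_score (s c)"
  shows "prob_vec p \<bullet> score_vec (s c) \<le> prob_vec p \<bullet> score_vec (s p)"
proof -
  have "expect p (s c) = ereal (prob_vec p \<bullet> score_vec (s c))"
    using \<open>finite_score (s c)\<close> by (intro expect_eq_inner) (simp add: finite_score_def)
  moreover have "expect p (s c) \<le> expect p (s p)"
    using proper p by (simp add: proper_def)
  ultimately show ?thesis
    using self_expect_eq_inner[OF p] by simp
qed

lemma score_vec_le_bound:
  assumes "finite_score (s c)"
  shows "score_vec (s c) $ \<omega> \<le> M"
proof -
  have "ereal (score_vec (s c) $ \<omega>) \<le> ereal M"
    using bounded[of c \<omega>] assms by (simp add: finite_score_def ereal_real')
  then show ?thesis
    by simp
qed

lemma self_expect_tendsto: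
  assumes ps: "\<And>n. ps n \<in> Probs" and p: "p \<in> Probs"
    and conv: "\<And>\<omega>. (\<lambda>n. ps n {\<omega>}) \<longlonglongrightarrow> p {\<omega>}"
    and finite: "\<And>n. finite_score (s (ps n))"
  shows "(\<lambda>n. expect (ps n) (s (ps n))) \<longlonglongrightarrow> expect p (s p)"
proof -
  define x where "x n = prob_vec (ps n)" for n
  define r where "r n = score_vec (s (ps n))" for n
  have x_lim: "x \<longlonglongrightarrow> prob_vec p"
    unfolding x_def by (rule vec_tendstoI) (simp add: conv)
  have r_lim: "(\<lambda>n. r n $ \<omega>) \<longlonglongrightarrow> score_vec (s p) $ \<omega>" if "p {\<omega>} \<noteq> 0" for \<omega>
  proof -
    have "\<bar>s (prob_of_vec (prob_vec p)) \<omega>\<bar> \<noteq> \<infinity>"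
      using score_finite_on_support[OF p that] by (simp add: prob_of_vec_prob_vec p)
    from tendsto_score_vec_nth[OF cont x_lim this] show ?thesis
      by (simp add: r_def x_def prob_of_vec_prob_vec ps p)
  qed
  define u where "u n = (\<chi> \<omega>. if p {\<omega>} = 0 then M else r n $ \<omega>)" for n
  define u_lim where "u_lim = (\<chi> \<omega>. if p {\<omega>} = 0 then M else score_vec (s p) $ \<omega>)"
  have "(\<lambda>n. x n \<bullet> r n) \<longlonglongrightarrow> prob_vec p \<bullet> score_vec (s p)"
  proof (rule tendsto_squeeze_lower_approximants)
    show "x n \<bullet> r m \<le> x n \<bullet> r n" for n m
      unfolding x_def r_def using inner_score_le_self[OF ps finite] .
    show "(\<lambda>n. x n \<bullet> r m) \<longlonglongrightarrow> prob_vec p \<bullet> r m" for m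
      using x_lim by (intro tendsto_intros)
    show "(\<lambda>m. prob_vec p \<bullet> r m) \<longlonglongrightarrow> prob_vec p \<bullet> score_vec (s p)"
      using r_lim by (intro tendsto_inner_on_support) simp
    show "x n \<bullet> r n \<le> x n \<bullet> u n" for n
      unfolding inner_vec_def u_def
      using Probs_nonneg[OF ps] score_vec_le_bound[OF finite]
      by (intro sum_mono) (simp add: x_def r_def mult_left_mono)
    have "u \<longlonglongrightarrow> u_lim"
      unfolding u_def u_lim_def by (rule vec_tendstoI) (use r_lim in auto)
    then have "(\<lambda>n. x n \<bullet> u n) \<longlonglongrightarrow> prob_vec p \<bullet> u_lim"
      using x_lim by (intro tendsto_intros)
    moreover have "prob_vec p \<bullet> u_lim = prob_vec p \<bullet> score_vec (s p)"
      unfolding inner_vec_def u_lim_def by (intro sum.cong) auto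
    ultimately show "(\<lambda>n. x n \<bullet> u n) \<longlonglongrightarrow> prob_vec p \<bullet> score_vec (s p)"
      by simp
  qed
  then show ?thesis
    unfolding x_def r_def using self_expect_eq_inner ps p by (simp add: tendsto_ereal)
qed

lemma positive_finite_score:
  assumes "x \<in> prob_simplex" "\<And>\<omega>. 0 < x $ \<omega>"
  shows "finite_score (s (prob_of_vec x))"
  unfolding finite_score_def
  using score_finite_on_support[OF prob_of_vec_in_Probs[OF assms(1)]] assms(2)
  by (simp add: less_imp_neq[symmetric])

lemma inner_le_self_score:
  assumes x: "x \<in> prob_simplex" and w: "w \<in> closure (convex hull finite_prob_scores s)"
  shows "x \<bullet> w \<le> x \<bullet> score_vec (s (prob_of_vec x))"
proof -
  let ?H = "{w. x \<bullet> w \<le> x \<bullet> score_vec (s (prob_of_vec x))}"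
  have "finite_prob_scores s \<subseteq> ?H"
  proof
    fix w assume "w \<in> finite_prob_scores s"
    then obtain c where "finite_score (s c)" and "w = score_vec (s c)"
      unfolding finite_prob_scores_eq by blast
    then show "w \<in> ?H"
      using inner_score_le_self[OF prob_of_vec_in_Probs[OF x]] by simp
  qed
  then have "closure (convex hull finite_prob_scores s) \<subseteq> ?H"
    by (intro closure_minimal hull_minimal) (auto simp: convex_halfspace_le closed_halfspace_le)
  then show ?thesis
    using w by blast
qed

lemma eq_score_if_maximizer:
  assumes q: "q \<in> prob_simplex" "\<And>\<omega>. 0 < q $ \<omega>"
    and z: "z \<in> closure (convex hull finite_prob_scores s)"
    and max: "q \<bullet> score_vec (s (prob_of_vec q)) \<le> q \<bullet> z"
  shows "z = score_vec (s (prob_of_vec q))"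
proof -
  let ?r = "\<lambda>x. score_vec (s (prob_of_vec x))"
  have eq: "q \<bullet> z = q \<bullet> ?r q"
    using inner_le_self_score[OF q(1) z] max by simp
  have "z $ \<omega> = ?r q $ \<omega>" for \<omega>
  proof -
    define d where "d = axis \<omega> 1 - q"
    have "d \<bullet> z = d \<bullet> ?r q"
    proof (rule eq_if_mult_le_near_zero)
      have shift_lim: "((\<lambda>t. q + t *\<^sub>R d) \<longlongrightarrow> q) (at 0)"
        by (auto intro!: tendsto_eq_intros)
      have "((\<lambda>t. ?r (q + t *\<^sub>R d)) \<longlongrightarrow> ?r q) (at 0)"
        using positive_finite_score[OF q] unfolding finite_score_def
        by (intro vec_tendstoI tendsto_score_vec_nth[OF cont shift_lim]) auto
      then show "((\<lambda>t. d \<bullet> ?r (q + t *\<^sub>R d)) \<longlongrightarrow> d \<bullet> ?r q) (at 0)"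
        by (intro tendsto_intros)
      show "0 < q $ \<omega>"
        by (rule q(2))
      fix t assume "\<bar>t\<bar> < q $ \<omega>"
      then have shifted: "q + t *\<^sub>R d \<in> prob_simplex" "\<And>\<omega>'. 0 < (q + t *\<^sub>R d) $ \<omega>'"
        unfolding d_def using simplex_shift_towards_vertex[OF q] by blast+
      have "(q + t *\<^sub>R d) \<bullet> z \<le> (q + t *\<^sub>R d) \<bullet> ?r (q + t *\<^sub>R d)"
        by (rule inner_le_self_score[OF shifted(1) z])
      moreover have "q \<bullet> ?r (q + t *\<^sub>R d) \<le> q \<bullet> ?r q"
        using inner_score_le_self[OF prob_of_vec_in_Probs[OF q(1)] positive_finite_score[OF shifted]]
        by simp
      ultimately show "t * (d \<bullet> z) \<le> t * (d \<bullet> ?r (q + t *\<^sub>R d))"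
        using eq by (simp add: inner_add_left)
    qed
    then show ?thesis
      using eq by (simp add: d_def inner_diff_left inner_axis')
  qed
  then show ?thesis
    by (simp add: vec_eq_iff)
qed

lemma pos_boundary_subset_finite_prob_scores:
  "pos_boundary (convex hull finite_prob_scores s) \<subseteq> finite_prob_scores s"
proof
  fix z assume "z \<in> pos_boundary (convex hull finite_prob_scores s)"
  then obtain v where z: "z \<in> closure (convex hull finite_prob_scores s)"
    and v: "\<And>\<omega>. 0 < v $ \<omega>"
    and supporting: "\<And>w. w \<in> convex hull finite_prob_scores s \<Longrightarrow> v \<bullet> w \<le> v \<bullet> z"
    unfolding pos_boundary_def frontier_def ip_eq_inner by blast
  define V where "V = (\<Sum>\<omega>\<in>UNIV. v $ \<omega>)"
  define q where "q = (1 / V) *\<^sub>R v"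
  have "0 < V"
    unfolding V_def using v by (intro sum_pos) auto
  then have q: "q \<in> prob_simplex" "\<And>\<omega>. 0 < q $ \<omega>"
    using v by (auto simp: prob_simplex_def q_def V_def less_imp_le simp flip: sum_divide_distrib)
  let ?r = "score_vec (s (prob_of_vec q))"
  have r: "?r \<in> finite_prob_scores s"
    unfolding finite_prob_scores_eq
    using prob_of_vec_in_Probs[OF q(1)] positive_finite_score[OF q] by blast
  have "v \<bullet> ?r \<le> v \<bullet> z"
    using supporting hull_inc[OF r] by blast
  then have "q \<bullet> ?r \<le> q \<bullet> z"
    using \<open>0 < V\<close> by (simp add: q_def divide_right_mono)
  then show "z \<in> finite_prob_scores s"
    using eq_score_if_maximizer[OF q z] r by simp
qed

end

theorem proposition2:
  fixes s :: "('w::finite set \<Rightarrow> real) \<Rightarrow> ('w \<Rightarrow> ereal)" and M :: real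
  assumes bounded: "\<forall>c \<omega>. s c \<omega> \<le> ereal M"
    and qsp: "quasi_strictly_proper s"
    and cont: "continuous_on UNIV s"
  shows "(\<exists>p\<in>Probs. \<bar>expect p (s p)\<bar> = \<infinity>) \<or>
    ((\<forall>(ps :: nat \<Rightarrow> ('w set \<Rightarrow> real)) p.
        (\<forall>n. ps n \<in> Probs) \<and> p \<in> Probs \<and> (\<forall>\<omega>. (\<lambda>n. ps n {\<omega>}) \<longlonglongrightarrow> p {\<omega>}) \<and>
        (\<forall>n. finite_score (s (ps n))) \<and> \<not> finite_score (s p)
        \<longrightarrow> (\<lambda>n. expect (ps n) (s (ps n))) \<longlonglongrightarrow> expect p (s p)) \<and>
     dense_in (finite_prob_scores s) (pos_boundary (convex hull (finite_prob_scores s))))"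
proof (cases "\<exists>p\<in>Probs. \<bar>expect p (s p)\<bar> = \<infinity>")
  case False
  then interpret continuous_proper_score s M
    using bounded qsp cont by unfold_locales (auto simp: quasi_strictly_proper_def)
  show ?thesis
    using self_expect_tendsto dense_in_if_subset[OF pos_boundary_subset_finite_prob_scores]
    by blast
qed simp

end
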